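(* Let $y_1,y_2,y_3\in Y(\mathfrak{o})$, $d\in D(3)$, $u\in U(3)$, $C\in\Gamma_\infty(3)$, and let $A=\varphi_2(y_1^{-1})\varphi_1(y_2^{-1})\varphi_2(y_3^{-1})\,d\,u\,C$. (1) If $A\in\Delta_1$ then $y_2\neq I_2$. (2) If $A\in\Delta_{1,1}$ then $y_3\neq I_2$.
   Context: Let $\omega=e^{2\pi i/3}$, $\mathfrak{o}=\mathbb{Z}[\omega]$, $\mathfrak{o}^\times$ its unit group. Fix representatives of nonzero elements of $\mathfrak{o}$ modulo units ("$c\in(\mathfrak{o}-\{0\})/\mathfrak{o}^\times$") and, for each nonzero $c$, representatives of $\mathfrak{o}/c\mathfrak{o}$ ("$a\in\mathfrak{o}/c\mathfrak{o}$"). $Y(\mathfrak{o})=\{\begin{pmatrix}a&b\\c&d\end{pmatrix}\in SL_2(\mathfrak{o}) : c\in(\mathfrak{o}-\{0\})/\mathfrak{o}^\times,\ a\in\mathfrak{o}/c\mathfrak{o}\}\cup\{I_2\}$. $\Gamma(3)=\{A\in SL_3(\mathfrak{o}):A\equiv I_3\pmod{3\mathfrak{o}}\}$ (entrywise), $\Gamma_\infty(3)$ its subgroup of upper triangular unipotent matrices. $D(3)$: diagonal $\mathrm{diag}(i,j,k)$, $i,j,k\in\mathfrak{o}$, $ijk=1$. $U(3)$: matrices $\begin{pmatrix}1&\alpha&\beta\\&1&\gamma\\&&1\end{pmatrix}$ with $\alpha,\beta,\gamma\in\{0,1,2\}+\{0,1,2\}\omega$. For $y=\begin{pmatrix}a&b\\c&d\end{pmatrix}$,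 $\varphi_1(y)=\begin{pmatrix}a&b&0\\c&d&0\\0&0&1\end{pmatrix}$, $\varphi_2(y)=\begin{pmatrix}1&0&0\\0&a&b\\0&c&d\end{pmatrix}$. For $A=(a_{ij})\in SL_3(\mathfrak{o})$: $\Delta_1=\{A: a_{21}\neq0 \text{ or } a_{31}\neq0\}$ and $\Delta_{1,1}=\{A : a_{21}a_{32}-a_{22}a_{31}\neq0\}$. *)

theory Defs
  imports "HOL-Analysis.Analysis"
begin

text \<open>Matrices are HOL-Analysis matrices over complex numbers; rows/columns are
indexed 1,2 (type 2) resp. 1,2,3 (type 3), entry (i,j) of M is M$i$j.\<close>

definition omega :: complex where
  "omega = cis (2 * pi / 3)"

definition Oring :: "complex set" where
  "Oring = {of_int a + of_int b * omega | a b. True}"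

definition unit_O :: "complex \<Rightarrow> bool" where
  "unit_O u \<longleftrightarrow> u \<in> Oring \<and> (\<exists>v\<in>Oring. u * v = 1)"

definition c_reps :: "complex set \<Rightarrow> bool" where
  "c_reps R \<longleftrightarrow> R \<subseteq> Oring - {0} \<and>
     (\<forall>z\<in>Oring - {0}. \<exists>!r. r \<in> R \<and> (\<exists>u. unit_O u \<and> z = u * r))"

definition a_reps :: "complex \<Rightarrow> complex set \<Rightarrow> bool" where
  "a_reps c S \<longleftrightarrow> S \<subseteq> Oring \<and>
     (\<forall>z\<in>Oring. \<exists>!s. s \<in> S \<and> (\<exists>t\<in>Oring. z - s = c * t))"

definition SL2O :: "(complex^2^2) set" where
  "SL2O = {M. (\<forall>i j. M$i$j \<in> Oring) \<and> det M = 1}"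

definition SL3O :: "(complex^3^3) set" where
  "SL3O = {M. (\<forall>i j. M$i$j \<in> Oring) \<and> det M = 1}"

text \<open>Y(o), relative to the fixed representative systems R (for c) and S c (for a mod c).\<close>
definition Yset :: "complex set \<Rightarrow> (complex \<Rightarrow> complex set) \<Rightarrow> (complex^2^2) set" where
  "Yset R S = {M \<in> SL2O. M$2$1 \<in> R \<and> M$1$1 \<in> S (M$2$1)} \<union> {mat 1}"

definition Gamma3 :: "(complex^3^3) set" where
  "Gamma3 = {A \<in> SL3O. \<forall>i j. \<exists>t\<in>Oring. A$i$j - (mat 1 :: complex^3^3)$i$j = 3 * t}"

definition upper_unipotent :: "complex^3^3 \<Rightarrow> bool" where
  "upper_unipotent A \<longleftrightarrow> A$1$1 = 1 \<and> A$2$2 = 1 \<and> A$3$3 = 1 \<and>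
     A$2$1 = 0 \<and> A$3$1 = 0 \<and> A$3$2 = 0"

definition Gamma_inf3 :: "(complex^3^3) set" where
  "Gamma_inf3 = {A \<in> Gamma3. upper_unipotent A}"

definition diag3 :: "complex \<Rightarrow> complex \<Rightarrow> complex \<Rightarrow> complex^3^3" where
  "diag3 i j k = vector [vector [i, 0, 0], vector [0, j, 0], vector [0, 0, k]]"

definition D3 :: "(complex^3^3) set" where
  "D3 = {diag3 i j k | i j k. i \<in> Oring \<and> j \<in> Oring \<and> k \<in> Oring \<and> i * j * k = 1}"

definition small_O :: "complex set" where
  "small_O = {of_int a + of_int b * omega | a b. a \<in> {0,1,2} \<and> b \<in> {0,1,2}}"

definition unip3 :: "complex \<Rightarrow> complex \<Rightarrow> complex \<Rightarrow> complex^3^3" where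
  "unip3 \<alpha> \<beta> \<gamma> = vector [vector [1, \<alpha>, \<beta>], vector [0, 1, \<gamma>], vector [0, 0, 1]]"

definition U3 :: "(complex^3^3) set" where
  "U3 = {unip3 \<alpha> \<beta> \<gamma> | \<alpha> \<beta> \<gamma>. \<alpha> \<in> small_O \<and> \<beta> \<in> small_O \<and> \<gamma> \<in> small_O}"

definition phi1 :: "complex^2^2 \<Rightarrow> complex^3^3" where
  "phi1 y = vector [vector [y$1$1, y$1$2, 0], vector [y$2$1, y$2$2, 0], vector [0, 0, 1]]"

definition phi2 :: "complex^2^2 \<Rightarrow> complex^3^3" where
  "phi2 y = vector [vector [1, 0, 0], vector [0, y$1$1, y$1$2], vector [0, y$2$1, y$2$2]]"

definition Delta1 :: "(complex^3^3) set" where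
  "Delta1 = {A \<in> SL3O. A$2$1 \<noteq> 0 \<or> A$3$1 \<noteq> 0}"

definition Delta11 :: "(complex^3^3) set" where
  "Delta11 = {A \<in> SL3O. A$2$1 * A$3$2 - A$2$2 * A$3$1 \<noteq> 0}"

end

theory Submission
  imports Defs
begin

text \<open>The factor \<open>d u C\<close> is upper triangular. If \<open>y\<^sub>2 = I\<close>, the remaining factors
  \<open>\<phi>\<^sub>2(\<cdot>)\<close> fix the first basis vector, so the first column of \<open>A\<close> is a multiple of it.
  If \<open>y\<^sub>3 = I\<close>, the third row of \<open>\<phi>\<^sub>1(y\<^sub>2\<^sup>-\<^sup>1) d u C\<close> vanishes in its first two entries,
  so its lower-left \<open>2 \<times> 2\<close> minor is zero; left multiplication by \<open>\<phi>\<^sub>2(y\<^sub>1\<^sup>-\<^sup>1)\<close> only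
  scales that minor by a determinant.\<close>

lemma matrix_inv_mat_1: "matrix_inv (mat 1 :: 'a::semiring_1^'n^'n) = mat 1"
proof -
  have "mat 1 ** matrix_inv (mat 1 :: 'a^'n^'n) = mat 1"
    unfolding matrix_inv_def by (rule someI2[of _ "mat 1"]) (auto simp: matrix_mul_lid)
  then show ?thesis by (simp add: matrix_mul_lid)
qed

lemma phi1_mat_1: "phi1 (mat 1) = mat 1"
  by (simp add: phi1_def mat_def vec_eq_iff forall_3 vector_3)

lemma phi2_mat_1: "phi2 (mat 1) = mat 1"
  by (simp add: phi2_def mat_def vec_eq_iff forall_3 vector_3)

lemma matrix_mult_3_nth:
  "((A::'a::comm_semiring_1^3^3) ** B)$i$j = A$i$1 * B$1$j + A$i$2 * B$2$j + A$i$3 * B$3$j"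
  by (simp add: matrix_matrix_mult_def sum_3)

text \<open>Rows and columns of type \<open>3\<close> are indexed by \<open>1, 2, 3\<close>, but the order of the numeral
  type has \<open>3 = 0\<close> as its least element, so upper triangularity is spelled out entrywise.\<close>

definition upper_triangular3 :: "'a::zero^3^3 \<Rightarrow> bool" where
  "upper_triangular3 A \<longleftrightarrow> A$2$1 = 0 \<and> A$3$1 = 0 \<and> A$3$2 = 0"

lemma upper_triangular3_mult:
  fixes A B :: "'a::comm_semiring_1^3^3"
  shows "upper_triangular3 A \<Longrightarrow> upper_triangular3 B \<Longrightarrow> upper_triangular3 (A ** B)"
  by (simp add: upper_triangular3_def matrix_mult_3_nth)

lemma upper_triangular3_D3: "d \<in> D3 \<Longrightarrow> upper_triangular3 d"
  by (auto simp: D3_def diag3_def upper_triangular3_def)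

lemma upper_triangular3_U3: "u \<in> U3 \<Longrightarrow> upper_triangular3 u"
  by (auto simp: U3_def unip3_def upper_triangular3_def)

lemma upper_triangular3_Gamma_inf3: "C \<in> Gamma_inf3 \<Longrightarrow> upper_triangular3 C"
  by (simp add: Gamma_inf3_def upper_unipotent_def upper_triangular3_def)

lemma phi2_mult_first_column:
  assumes "M$2$1 = 0" and "M$3$1 = 0"
  shows "(phi2 x ** M)$2$1 = 0 \<and> (phi2 x ** M)$3$1 = 0"
  using assms by (simp add: matrix_mult_3_nth phi2_def)

definition lower_left_minor :: "'a::comm_ring^3^3 \<Rightarrow> 'a" where
  "lower_left_minor M = M$2$1 * M$3$2 - M$2$2 * M$3$1"

lemma lower_left_minor_phi2_mult:
  "lower_left_minor (phi2 x ** M) = det x * lower_left_minor M"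
  by (simp add: lower_left_minor_def matrix_mult_3_nth phi2_def det_2 algebra_simps)

lemma lower_left_minor_phi1_mult:
  assumes "upper_triangular3 T"
  shows "lower_left_minor (phi1 y ** T) = 0"
  using assms by (simp add: lower_left_minor_def matrix_mult_3_nth phi1_def upper_triangular3_def)

theorem lemma2p12:
  fixes R :: "complex set" and S :: "complex \<Rightarrow> complex set"
    and y1 y2 y3 :: "complex^2^2" and d u C A :: "complex^3^3"
  assumes "c_reps R"
    and "\<forall>c\<in>R. a_reps c (S c)"
    and "y1 \<in> Yset R S" and "y2 \<in> Yset R S" and "y3 \<in> Yset R S"
    and "d \<in> D3" and "u \<in> U3" and "C \<in> Gamma_inf3"
    and "A = phi2 (matrix_inv y1) ** phi1 (matrix_inv y2) ** phi2 (matrix_inv y3) ** d ** u ** C"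
  shows "(A \<in> Delta1 \<longrightarrow> y2 \<noteq> mat 1) \<and> (A \<in> Delta11 \<longrightarrow> y3 \<noteq> mat 1)"
proof -
  define T where "T = d ** u ** C"
  have T: "upper_triangular3 T"
    unfolding T_def using assms(6-8)
    by (intro upper_triangular3_mult upper_triangular3_D3 upper_triangular3_U3 upper_triangular3_Gamma_inf3)
  have A: "A = phi2 (matrix_inv y1) ** (phi1 (matrix_inv y2) ** (phi2 (matrix_inv y3) ** T))"
    using assms(9) by (simp add: T_def matrix_mul_assoc)
  show ?thesis
  proof (intro conjI impI notI)
    assume "A \<in> Delta1" and "y2 = mat 1"
    then have "A = phi2 (matrix_inv y1) ** (phi2 (matrix_inv y3) ** T)"
      by (simp add: A matrix_inv_mat_1 phi1_mat_1 matrix_mul_lid)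
    with T have "A$2$1 = 0 \<and> A$3$1 = 0"
      by (simp add: phi2_mult_first_column upper_triangular3_def)
    with \<open>A \<in> Delta1\<close> show False by (simp add: Delta1_def)
  next
    assume "A \<in> Delta11" and "y3 = mat 1"
    then have "A = phi2 (matrix_inv y1) ** (phi1 (matrix_inv y2) ** T)"
      by (simp add: A matrix_inv_mat_1 phi2_mat_1 matrix_mul_lid)
    with T have "lower_left_minor A = 0"
      by (simp add: lower_left_minor_phi2_mult lower_left_minor_phi1_mult)
    with \<open>A \<in> Delta11\<close> show False by (simp add: Delta11_def lower_left_minor_def)
  qed
qed

end
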